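(* Let $\mathcal{M}=(E,\mathcal{I})$ be a matroid with $|E|=n$ whose ground set is dependent, and suppose we are given real numbers $\widehat{q}_T$ for all $T\subseteq E$ with $|\widehat{q}_T-q_{T,\mathcal{M}}|\le 1/n^2$. Run the following procedure: set $S\leftarrow E$; while there exists a nonempty $T\subseteq S$ with $\widehat{q}_S-\widehat{q}_{S\setminus T}\le \frac{|T|}{2^{20}|S|\log n}$, pick any such $T$ and set $S\leftarrow S\setminus T$; finally output $S$. Then, for all sufficiently large $n$, the output $S$ is nonempty and globally optimal in $\mathcal{M}$, i.e. $q_{S,\mathcal{M}}\ge 1-2^{-20}$ and $p_{T,\mathcal{M}|_S}\ge \frac{|T|}{2^{21}|S|\log n}$ for every $T\subseteq S$.
   Context: $\log$ denotes the base-2 logarithm. For a matroid $\mathcal{N}$ whose ground set $F$ is dependent and a permutation $\pi$ of $F$, $C_\pi$ denotes the first circuit formed when adding elements in the order of $\pi$ (the unique circuit contained in the shortest dependent prefix of $\pi$). For $T\subseteq F$, $p_{T,\mathcal{N}}=\Pr_\pi[C_\pi\cap T\neq\emptyset]$ and $q_{T,\mathcal{N}}=\Pr_\pi[C_\pi\subseteq T]$, with $\pi$ uniformly random over permutations of $F$. $\mathcal{M}|_S$ is the restriction of $\mathcal{M}$ to $S$. A set $S\subseteq E$ is globally optimal in $\mathcal{M}$ (with $n=|E|$) if $q_{S,\mathcal{M}}\ge 1-2^{-20}$ and $p_{T,\mathcal{M}|_S}\ge \frac{|T|}{2^{21}|S|\log n}$ for all $T\subseteq S$. *)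

theory Defs
  imports Complex_Main "HOL-Combinatorics.Multiset_Permutations"
begin

definition matroid :: "'a set \<Rightarrow> ('a set \<Rightarrow> bool) \<Rightarrow> bool" where
  "matroid E indep \<longleftrightarrow> finite E
     \<and> (\<forall>X. indep X \<longrightarrow> X \<subseteq> E)
     \<and> indep {}
     \<and> (\<forall>X Y. indep Y \<and> X \<subseteq> Y \<longrightarrow> indep X)
     \<and> (\<forall>X Y. indep X \<and> indep Y \<and> card X < card Y \<longrightarrow> (\<exists>y\<in>Y - X. indep (insert y X)))"

definition restrict_indep :: "('a set \<Rightarrow> bool) \<Rightarrow> 'a set \<Rightarrow> 'a set \<Rightarrow> bool" where
  "restrict_indep indep S = (\<lambda>X. X \<subseteq> S \<and> indep X)"

definition circuit :: "('a set \<Rightarrow> bool) \<Rightarrow> 'a set \<Rightarrow> bool" where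
  "circuit indep C \<longleftrightarrow> \<not> indep C \<and> (\<forall>D. D \<subset> C \<longrightarrow> indep D)"

definition first_circuit :: "('a set \<Rightarrow> bool) \<Rightarrow> 'a list \<Rightarrow> 'a set" where
  "first_circuit indep \<pi> =
     (let k = (LEAST k. \<not> indep (set (take k \<pi>)))
      in THE C. circuit indep C \<and> C \<subseteq> set (take k \<pi>))"

definition p_prob :: "'a set \<Rightarrow> ('a set \<Rightarrow> bool) \<Rightarrow> 'a set \<Rightarrow> real" where
  "p_prob F indep T =
     card {\<pi> \<in> permutations_of_set F. first_circuit indep \<pi> \<inter> T \<noteq> {}}
     / card (permutations_of_set F)"

definition q_prob :: "'a set \<Rightarrow> ('a set \<Rightarrow> bool) \<Rightarrow> 'a set \<Rightarrow> real" where
  "q_prob F indep T =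
     card {\<pi> \<in> permutations_of_set F. first_circuit indep \<pi> \<subseteq> T}
     / card (permutations_of_set F)"

definition globally_optimal :: "'a set \<Rightarrow> ('a set \<Rightarrow> bool) \<Rightarrow> 'a set \<Rightarrow> bool" where
  "globally_optimal E indep S \<longleftrightarrow>
     q_prob E indep S \<ge> 1 - 2 powi (-20)
     \<and> (\<forall>T \<subseteq> S. p_prob S (restrict_indep indep S) T
            \<ge> card T / (2^21 * card S * log 2 (card E)))"

definition prune_step :: "('a set \<Rightarrow> real) \<Rightarrow> nat \<Rightarrow> 'a set \<Rightarrow> 'a set \<Rightarrow> bool" where
  "prune_step qh n S S' \<longleftrightarrow>
     (\<exists>T. T \<noteq> {} \<and> T \<subseteq> S \<and> qh S - qh (S - T) \<le> card T / (2^20 * card S * log 2 n)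
          \<and> S' = S - T)"

definition prune_output :: "('a set \<Rightarrow> real) \<Rightarrow> nat \<Rightarrow> 'a set \<Rightarrow> 'a set \<Rightarrow> bool" where
  "prune_output qh n E S \<longleftrightarrow> (prune_step qh n)\<^sup>*\<^sup>* E S \<and> (\<nexists>S'. prune_step qh n S S')"

end

(*
  Each pruning step S \<mapsto> S - T lowers q by at most |T| / (2^20 |S| log n), up to the
  estimation error 2/n^2. With the potential 1 + ln s, the ratio |T|/|S| is at most the drop
  in potential, so the losses telescope and the output keeps
  q_S \<ge> 1 - (1 + ln n)/(2^20 log n) - 2/n \<ge> 1 - 2^-20 for large n.
  When the procedure stops, every nonempty T \<subseteq> S fails the test, so q_S - q_{S-T} is
  almost |T| / (2^20 |S| log n). Finally q_S - q_{S-T} \<le> p_{T,M|S}: if the first circuit of a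
  permutation of E lies in S, it is also the first circuit of the permutation filtered to S,
  and filtering a uniform permutation of E to S gives a uniform permutation of S.
*)
theory Submission
  imports Defs "HOL-Analysis.Harmonic_Numbers" "HOL-Real_Asymp.Real_Asymp"
begin

lemma circuit_nonempty: "indep {} \<Longrightarrow> circuit indep C \<Longrightarrow> C \<noteq> {}"
  unfolding circuit_def by blast

lemma dependent_contains_circuit:
  "finite X \<Longrightarrow> \<not> indep X \<Longrightarrow> \<exists>C\<subseteq>X. circuit indep C"
proof (induction X rule: finite_psubset_induct)
  case (psubset X)
  show ?case
  proof (cases "\<forall>D. D \<subset> X \<longrightarrow> indep D")
    case True
    then show ?thesis using psubset.prems unfolding circuit_def by blast
  next
    case False
    then obtain D where "D \<subset> X" "\<not> indep D" by auto
    with psubset.IH show ?thesis by (meson order.trans psubset_imp_subset)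
  qed
qed

lemma circuit_restrict_indep:
  "C \<subseteq> S \<Longrightarrow> circuit (restrict_indep indep S) C \<longleftrightarrow> circuit indep C"
  unfolding circuit_def restrict_indep_def by (meson order.trans psubset_imp_subset)

lemma first_circuit_restrict_indep:
  assumes "set xs \<subseteq> S"
  shows "first_circuit (restrict_indep indep S) xs = first_circuit indep xs"
proof -
  have prefix: "set (take k xs) \<subseteq> S" for k
    using assms set_take_subset by (rule order_trans[rotated])
  have "(\<lambda>k. \<not> restrict_indep indep S (set (take k xs))) = (\<lambda>k. \<not> indep (set (take k xs)))"
    using prefix unfolding restrict_indep_def by simp
  moreover have "(\<lambda>C. circuit (restrict_indep indep S) C \<and> C \<subseteq> set (take k xs))
      = (\<lambda>C. circuit indep C \<and> C \<subseteq> set (take k xs))" for k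
    by (intro ext) (meson circuit_restrict_indep order_trans prefix)
  ultimately show ?thesis
    unfolding first_circuit_def by simp
qed

locale finite_matroid =
  fixes E :: "'a set" and indep :: "'a set \<Rightarrow> bool"
  assumes matroid: "matroid E indep"
begin

lemma
  shows finite_ground: "finite E"
    and indep_subset_ground: "indep X \<Longrightarrow> X \<subseteq> E"
    and indep_empty: "indep {}"
    and indep_subset: "indep Y \<Longrightarrow> X \<subseteq> Y \<Longrightarrow> indep X"
    and indep_augment: "indep X \<Longrightarrow> indep Y \<Longrightarrow> card X < card Y \<Longrightarrow> \<exists>y\<in>Y - X. indep (insert y X)"
  using matroid unfolding matroid_def by blast+

lemma indep_finite: "indep X \<Longrightarrow> finite X"
  using finite_ground indep_subset_ground finite_subset by blast

lemma indep_extend_within: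
  "indep X \<Longrightarrow> indep I \<Longrightarrow> X \<subseteq> Y \<Longrightarrow> I \<subseteq> Y \<Longrightarrow> card X \<le> card I
     \<Longrightarrow> \<exists>B. X \<subseteq> B \<and> B \<subseteq> Y \<and> indep B \<and> card B = card I"
proof (induction "card I - card X" arbitrary: X)
  case 0
  then show ?case by auto
next
  case (Suc k)
  then obtain y where y: "y \<in> I - X" "indep (insert y X)"
    using indep_augment by (metis zero_less_Suc zero_less_diff)
  have "card (insert y X) = Suc (card X)"
    using y(1) indep_finite[OF Suc.prems(1)] by simp
  with Suc.hyps(2) Suc.prems y have "\<exists>B. insert y X \<subseteq> B \<and> B \<subseteq> Y \<and> indep B \<and> card B = card I"
    by (intro Suc.hyps(1)) auto
  then show ?case by auto
qed

lemma circuit_unique_in_insert: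
  assumes I: "indep I" and C1: "circuit indep C1" and C2: "circuit indep C2"
    and sub1: "C1 \<subseteq> insert x I" and sub2: "C2 \<subseteq> insert x I"
  shows "C1 = C2"
proof (rule ccontr)
  assume "C1 \<noteq> C2"
  have dep1: "\<not> indep C1" and dep2: "\<not> indep C2"
    using C1 C2 unfolding circuit_def by auto
  have "x \<notin> I"
    using sub1 dep1 indep_subset[OF I] by (metis insert_absorb)
  have "x \<in> C2"
    using sub2 dep2 indep_subset[OF I] by (metis subset_insert)
  have "\<not> C1 \<subseteq> C2"
    using \<open>C1 \<noteq> C2\<close> C2 dep1 unfolding circuit_def by (metis psubsetI)
  then obtain y where y: "y \<in> C1" "y \<notin> C2" by auto
  with \<open>x \<in> C2\<close> sub1 have "y \<in> I" by auto
  define J where "J = insert x I - {y}"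
  have finite_J: "finite J" and card_J: "card J = card I"
    using \<open>x \<notin> I\<close> \<open>y \<in> I\<close> indep_finite[OF I] unfolding J_def by simp_all
  have indep_C1y: "indep (C1 - {y})"
    using C1 y(1) unfolding circuit_def by blast
  have C1y_J: "C1 - {y} \<subseteq> J"
    using sub1 unfolding J_def by blast
  then have card_C1y: "card (C1 - {y}) \<le> card I"
    using card_mono[OF finite_J] card_J by simp
  from C1y_J have "C1 - {y} \<subseteq> insert x I"
    unfolding J_def by blast
  then obtain B where B: "C1 - {y} \<subseteq> B" "B \<subseteq> insert x I" "indep B" "card B = card I"
    using indep_extend_within[OF indep_C1y I _ subset_insertI[of I x] card_C1y] by auto
  \<comment> \<open>B is as large as I inside insert x I but misses y, so B = J; yet J contains C2.\<close>
  have "y \<notin> B"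
  proof
    assume "y \<in> B"
    with B(1) have "C1 \<subseteq> B" by blast
    with B(3) dep1 show False by (metis indep_subset)
  qed
  with B(2) have "B \<subseteq> J"
    unfolding J_def by blast
  then have "B = J"
    using card_subset_eq[OF finite_J] B(4) card_J by simp
  with sub2 y(2) have "C2 \<subseteq> B"
    unfolding J_def by blast
  with B(3) dep2 show False by (metis indep_subset)
qed

lemma first_circuit_eqI:
  assumes m: "m < length xs" and I: "indep (set (take m xs))"
    and C: "circuit indep C" and CS: "C \<subseteq> set (take (Suc m) xs)"
  shows "first_circuit indep xs = C"
proof -
  have "\<not> indep (set (take (Suc m) xs))"
    using C CS indep_subset unfolding circuit_def by blast
  moreover have "indep (set (take k xs))" if "k \<le> m" for k
    using indep_subset[OF I] set_take_subset_set_take[OF that] .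
  ultimately have least: "(LEAST k. \<not> indep (set (take k xs))) = Suc m"
    by (intro Least_equality; metis not_less_eq_eq)
  have prefix: "set (take (Suc m) xs) = insert (xs ! m) (set (take m xs))"
    using m by (simp add: take_Suc_conv_app_nth)
  show ?thesis
    unfolding first_circuit_def Let_def least
    using C CS circuit_unique_in_insert[OF I] prefix by (intro the_equality) auto
qed

lemma first_circuit_prefixE:
  assumes "\<not> indep (set xs)"
  obtains m where "m < length xs" "indep (set (take m xs))"
    "circuit indep (first_circuit indep xs)"
    "first_circuit indep xs \<subseteq> set (take (Suc m) xs)" "xs ! m \<in> first_circuit indep xs"
proof -
  let ?dep = "\<lambda>k. \<not> indep (set (take k xs))"
  define k where "k = (LEAST k. ?dep k)"
  have dep_all: "?dep (length xs)" using assms by simp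
  have dep_k: "?dep k"
    unfolding k_def using dep_all by (rule LeastI)
  moreover have "k \<le> length xs"
    unfolding k_def using dep_all by (rule Least_le)
  moreover have "k \<noteq> 0" using dep_k indep_empty by (cases k) auto
  ultimately obtain m where km: "k = Suc m" and m: "m < length xs"
    by (metis Suc_le_lessD not0_implies_Suc)
  have I: "indep (set (take m xs))"
    using not_less_Least[of m ?dep] km unfolding k_def by simp
  obtain C where CS: "C \<subseteq> set (take (Suc m) xs)" and C: "circuit indep C"
    using dependent_contains_circuit dep_k km by blast
  have fc: "first_circuit indep xs = C"
    using first_circuit_eqI[OF m I C CS] .
  have "\<not> C \<subseteq> set (take m xs)"
    using C I indep_subset unfolding circuit_def by blast
  then have "xs ! m \<in> C"
    using CS m by (auto simp: take_Suc_conv_app_nth)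
  with that m I C CS fc show thesis by simp
qed

lemma
  assumes "\<not> indep (set xs)"
  shows circuit_first_circuit: "circuit indep (first_circuit indep xs)"
    and first_circuit_subset: "first_circuit indep xs \<subseteq> set xs"
  using first_circuit_prefixE[OF assms] by (metis set_take_subset order.trans)+

lemma first_circuit_filter:
  assumes dep: "\<not> indep (set xs)" and CS: "first_circuit indep xs \<subseteq> S"
  shows "first_circuit indep (filter (\<lambda>x. x \<in> S) xs) = first_circuit indep xs"
proof -
  obtain m where m: "m < length xs" and I: "indep (set (take m xs))"
    and C: "circuit indep (first_circuit indep xs)"
    and C_prefix: "first_circuit indep xs \<subseteq> set (take (Suc m) xs)"
    and xm: "xs ! m \<in> first_circuit indep xs"
    using first_circuit_prefixE[OF dep] by blast
  define pre where "pre = filter (\<lambda>x. x \<in> S) (take m xs)"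
  have "filter (\<lambda>x. x \<in> S) (take m xs @ xs ! m # drop (Suc m) xs)
      = pre @ xs ! m # filter (\<lambda>x. x \<in> S) (drop (Suc m) xs)"
    using xm CS unfolding pre_def by auto
  then have split: "filter (\<lambda>x. x \<in> S) xs = pre @ xs ! m # filter (\<lambda>x. x \<in> S) (drop (Suc m) xs)"
    by (simp only: id_take_nth_drop[OF m, symmetric])
  have "indep (set pre)"
    using indep_subset[OF I] unfolding pre_def by auto
  moreover have "first_circuit indep xs \<subseteq> set (pre @ [xs ! m])"
    using C_prefix CS m unfolding pre_def by (auto simp: take_Suc_conv_app_nth)
  ultimately show ?thesis
    using first_circuit_eqI[OF _ _ C, of "length pre"] split by simp
qed

end

lemma permutations_of_set_map_permutes:
  assumes "\<sigma> \<in> permutations_of_set S" "\<sigma>' \<in> permutations_of_set S"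
  obtains f where "f permutes S" "map f \<sigma> = \<sigma>'"
proof
  let ?f = "permutation_of_list (zip \<sigma> \<sigma>')"
  have len: "length \<sigma> = length \<sigma>'"
    using assms by (metis distinct_card permutations_of_setD)
  then have "list_permutes (zip \<sigma> \<sigma>') S"
    using assms by (auto simp: list_permutes_def dest: permutations_of_setD)
  then show "?f permutes S" by simp
  have "?f (\<sigma> ! i) = \<sigma>' ! i" if "i < length \<sigma>" for i
    using that len assms(1) by (intro permutation_of_list_unique')
      (auto simp: in_set_zip dest: permutations_of_setD)
  with len show "map ?f \<sigma> = \<sigma>'"
    by (intro nth_equalityI) auto
qed

lemma card_filter_fibre_le:
  assumes SE: "S \<subseteq> E" and \<sigma>: "\<sigma> \<in> permutations_of_set S" and \<sigma>': "\<sigma>' \<in> permutations_of_set S"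
  shows "card {\<pi> \<in> permutations_of_set E. filter (\<lambda>x. x \<in> S) \<pi> = \<sigma>}
    \<le> card {\<pi> \<in> permutations_of_set E. filter (\<lambda>x. x \<in> S) \<pi> = \<sigma>'}"
proof -
  obtain f where f: "f permutes S" "map f \<sigma> = \<sigma>'"
    using permutations_of_set_map_permutes[OF \<sigma> \<sigma>'] .
  have fE: "f permutes E"
    using permutes_subset[OF f(1) SE] .
  have "filter (\<lambda>x. x \<in> S) (map f \<pi>) = map f (filter (\<lambda>x. x \<in> S) \<pi>)" for \<pi>
    using permutes_in_image[OF f(1)] by (simp add: filter_map comp_def)
  then have "map f ` {\<pi> \<in> permutations_of_set E. filter (\<lambda>x. x \<in> S) \<pi> = \<sigma>}
      \<subseteq> {\<pi> \<in> permutations_of_set E. filter (\<lambda>x. x \<in> S) \<pi> = \<sigma>'}"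
    using permutations_of_set_image_permutes[OF fE] f(2) by auto
  moreover have "inj_on (map f) {\<pi> \<in> permutations_of_set E. filter (\<lambda>x. x \<in> S) \<pi> = \<sigma>}"
    using inj_mapI[OF permutes_inj[OF fE]] by (rule inj_on_subset) simp
  ultimately show ?thesis
    by (intro card_inj_on_le) auto
qed

lemma card_filter_preimage:
  assumes "finite E" and SE: "S \<subseteq> E" and A: "A \<subseteq> permutations_of_set S"
  shows "card {\<pi> \<in> permutations_of_set E. filter (\<lambda>x. x \<in> S) \<pi> \<in> A} / fact (card E)
    = card A / (fact (card S) :: real)"
proof -
  let ?fibre = "\<lambda>\<sigma>. {\<pi> \<in> permutations_of_set E. filter (\<lambda>x. x \<in> S) \<pi> = \<sigma>}"
  have "finite S" using assms finite_subset by blast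
  then obtain \<sigma>\<^sub>0 where \<sigma>\<^sub>0: "\<sigma>\<^sub>0 \<in> permutations_of_set S"
    by (metis ex_in_conv permutations_of_set_empty_iff)
  define c where "c = card (?fibre \<sigma>\<^sub>0)"
  have card_fibre: "card (?fibre \<sigma>) = c" if "\<sigma> \<in> permutations_of_set S" for \<sigma>
    unfolding c_def using card_filter_fibre_le[OF SE that \<sigma>\<^sub>0] card_filter_fibre_le[OF SE \<sigma>\<^sub>0 that]
    by (rule le_antisym)
  have count: "card {\<pi> \<in> permutations_of_set E. filter (\<lambda>x. x \<in> S) \<pi> \<in> B} = card B * c"
    if B: "B \<subseteq> permutations_of_set S" for B
  proof -
    have "finite B"
      using B finite_permutations_of_set finite_subset by blast
    have "{\<pi> \<in> permutations_of_set E. filter (\<lambda>x. x \<in> S) \<pi> \<in> B} = (\<Union>\<sigma>\<in>B. ?fibre \<sigma>)"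
      by blast
    also have "card \<dots> = (\<Sum>\<sigma>\<in>B. card (?fibre \<sigma>))"
      using \<open>finite B\<close> by (intro card_UN_disjoint) auto
    also have "\<dots> = (\<Sum>\<sigma>\<in>B. c)"
      using B card_fibre by (intro sum.cong) auto
    finally show ?thesis by simp
  qed
  have "{\<pi> \<in> permutations_of_set E. filter (\<lambda>x. x \<in> S) \<pi> \<in> permutations_of_set S}
      = permutations_of_set E"
    using SE by (auto simp: permutations_of_set_def)
  then have fact_E: "fact (card E) = fact (card S) * c"
    using count[OF order_refl] \<open>finite E\<close> \<open>finite S\<close> by simp
  then have "c \<noteq> 0"
    by (metis fact_nonzero mult_0_right)
  moreover from fact_E have "(fact (card E) :: real) = fact (card S) * c"
    by (metis of_nat_fact of_nat_mult)
  ultimately show ?thesis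
    using count[OF A] by (simp add: field_simps)
qed

locale dependent_matroid = finite_matroid +
  assumes dependent: "\<not> indep E"
begin

lemma first_circuit_permutation:
  assumes "\<pi> \<in> permutations_of_set E"
  shows "circuit indep (first_circuit indep \<pi>)" and "first_circuit indep \<pi> \<subseteq> E"
  using circuit_first_circuit[of \<pi>] first_circuit_subset[of \<pi>] dependent assms
  by (auto dest: permutations_of_setD)

lemma q_prob_ground: "q_prob E indep E = 1"
proof -
  have "{\<pi> \<in> permutations_of_set E. first_circuit indep \<pi> \<subseteq> E} = permutations_of_set E"
    using first_circuit_permutation(2) by blast
  then show ?thesis
    unfolding q_prob_def using finite_ground by simp
qed

lemma q_prob_empty: "q_prob E indep {} = 0"
  using first_circuit_permutation(1) circuit_nonempty[of indep, OF indep_empty]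
  unfolding q_prob_def by simp

lemma q_prob_diff_le_p_prob:
  assumes SE: "S \<subseteq> E" and "T \<subseteq> S"
  shows "q_prob E indep S - q_prob E indep (S - T) \<le> p_prob S (restrict_indep indep S) T"
proof -
  let ?P = "permutations_of_set E" and ?C = "first_circuit indep"
  define A where "A = {\<sigma> \<in> permutations_of_set S. first_circuit (restrict_indep indep S) \<sigma> \<inter> T \<noteq> {}}"
  have "finite S"
    using finite_ground SE finite_subset by blast
  have split: "{\<pi> \<in> ?P. ?C \<pi> \<subseteq> S}
      = {\<pi> \<in> ?P. ?C \<pi> \<subseteq> S - T} \<union> {\<pi> \<in> ?P. ?C \<pi> \<subseteq> S \<and> ?C \<pi> \<inter> T \<noteq> {}}"
    by blast
  have "card {\<pi> \<in> ?P. ?C \<pi> \<subseteq> S}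
      = card {\<pi> \<in> ?P. ?C \<pi> \<subseteq> S - T} + card {\<pi> \<in> ?P. ?C \<pi> \<subseteq> S \<and> ?C \<pi> \<inter> T \<noteq> {}}"
    unfolding split by (intro card_Un_disjoint) auto
  then have "q_prob E indep S - q_prob E indep (S - T)
      = card {\<pi> \<in> ?P. ?C \<pi> \<subseteq> S \<and> ?C \<pi> \<inter> T \<noteq> {}} / fact (card E)"
    unfolding q_prob_def using finite_ground by (simp add: add_divide_distrib)
  also have "\<dots> \<le> card {\<pi> \<in> ?P. filter (\<lambda>x. x \<in> S) \<pi> \<in> A} / fact (card E)"
  proof (intro divide_right_mono of_nat_mono card_mono; clarsimp)
    fix \<pi> assume \<pi>: "\<pi> \<in> ?P" and "?C \<pi> \<subseteq> S" "?C \<pi> \<inter> T \<noteq> {}"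
    have "\<not> indep (set \<pi>)"
      using \<pi> dependent by (auto dest: permutations_of_setD)
    moreover have "filter (\<lambda>x. x \<in> S) \<pi> \<in> permutations_of_set S"
      using \<pi> SE by (auto simp: permutations_of_set_def)
    moreover have "first_circuit (restrict_indep indep S) (filter (\<lambda>x. x \<in> S) \<pi>) = ?C \<pi>"
      using first_circuit_restrict_indep[of "filter (\<lambda>x. x \<in> S) \<pi>" S indep]
        first_circuit_filter[OF \<open>\<not> indep (set \<pi>)\<close> \<open>?C \<pi> \<subseteq> S\<close>] by auto
    ultimately show "filter (\<lambda>x. x \<in> S) \<pi> \<in> A"
      using \<open>?C \<pi> \<inter> T \<noteq> {}\<close> unfolding A_def by simp
  qed
  also have "\<dots> = card A / fact (card S)"
    using finite_ground SE by (intro card_filter_preimage) (auto simp: A_def)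
  also have "\<dots> = p_prob S (restrict_indep indep S) T"
    unfolding p_prob_def A_def using \<open>finite S\<close> by simp
  finally show ?thesis .
qed

end

definition potential :: "nat \<Rightarrow> real" where
  "potential s = (if s = 0 then 0 else 1 + ln (real s))"

lemma potential_nonneg: "0 \<le> potential s"
  unfolding potential_def by simp

lemma potential_diff_ge:
  assumes "1 \<le> t" "t \<le> s"
  shows "real t / real s \<le> potential s - potential (s - t)"
proof (cases "t = s")
  case True
  with assms show ?thesis
    unfolding potential_def by simp
next
  case False
  with assms have pos: "0 < real (s - t)" "0 < real s" by simp_all
  have "ln (real (s - t) / real s) \<le> real (s - t) / real s - 1"
    using pos by (intro ln_le_minus_one) simp
  also have "\<dots> = - (real t / real s)"
    using pos assms by (simp add: of_nat_diff field_simps)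
  finally show ?thesis
    using pos unfolding potential_def by (simp add: ln_div)
qed

lemma prune_reachable_subset: "(prune_step qh n)\<^sup>*\<^sup>* E S \<Longrightarrow> S \<subseteq> E"
  by (induction rule: rtranclp_induct) (auto simp: prune_step_def)

locale prune_run = dependent_matroid +
  fixes qh :: "'a set \<Rightarrow> real"
  assumes estimate: "T \<subseteq> E \<Longrightarrow> \<bar>qh T - q_prob E indep T\<bar> \<le> 1 / (real (card E))\<^sup>2"
begin

lemma estimate_diff:
  assumes "S \<subseteq> E"
  shows "\<bar>(qh S - qh (S - T)) - (q_prob E indep S - q_prob E indep (S - T))\<bar> \<le> 2 / (real (card E))\<^sup>2"
proof -
  have "S - T \<subseteq> E" using assms by blast
  then show ?thesis
    using estimate[OF assms] estimate[of "S - T"] by (simp add: abs_le_iff)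
qed

lemma q_prob_prune_step:
  assumes L: "0 < log 2 (card E)" and SE: "S \<subseteq> E" and step: "prune_step qh (card E) S S'"
  shows "card S' < card S"
    and "q_prob E indep S - (potential (card S) - potential (card S')) / (2^20 * log 2 (card E))
           - 2 / (real (card E))\<^sup>2 \<le> q_prob E indep S'"
proof -
  obtain T where T: "T \<noteq> {}" "T \<subseteq> S" "S' = S - T"
    and small: "qh S - qh (S - T) \<le> card T / (2^20 * card S * log 2 (card E))"
    using step unfolding prune_step_def by blast
  have "finite S"
    using finite_ground SE finite_subset by blast
  then have t: "1 \<le> card T" "card T \<le> card S" and card_S': "card S' = card S - card T"
    using T card_mono[of S T] by (auto simp: Suc_le_eq card_gt_0_iff card_Diff_subset finite_subset)
  then show "card S' < card S" by simp
  have "card T / (2^20 * card S * log 2 (card E))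
      = (card T / card S) / (2^20 * log 2 (card E))"
    by simp
  also have "\<dots> \<le> (potential (card S) - potential (card S')) / (2^20 * log 2 (card E))"
    using potential_diff_ge[OF t] card_S' L by (intro divide_right_mono) simp_all
  finally show "q_prob E indep S - (potential (card S) - potential (card S')) / (2^20 * log 2 (card E))
           - 2 / (real (card E))\<^sup>2 \<le> q_prob E indep S'"
    using small estimate_diff[OF SE, of T] unfolding abs_le_iff T(3) by linarith
qed

lemma q_prob_prune_reachable:
  assumes L: "0 < log 2 (card E)" and reach: "(prune_step qh (card E))\<^sup>*\<^sup>* E S"
  shows "1 - (potential (card E) - potential (card S)) / (2^20 * log 2 (card E))
           - 2 * real (card E - card S) / (real (card E))\<^sup>2 \<le> q_prob E indep S"
  using reach
proof (induction rule: rtranclp_induct)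
  case base
  then show ?case using q_prob_ground by simp
next
  case (step S S')
  have SE: "S \<subseteq> E"
    using prune_reachable_subset[OF step.hyps(1)] .
  have "card S \<le> card E"
    using card_mono[OF finite_ground SE] .
  with q_prob_prune_step(1)[OF L SE step.hyps(2)]
  have "2 * real (card E - card S) / (real (card E))\<^sup>2 + 2 / (real (card E))\<^sup>2
      \<le> 2 * real (card E - card S') / (real (card E))\<^sup>2"
    by (simp add: add_divide_distrib[symmetric] divide_right_mono of_nat_diff)
  with step.IH q_prob_prune_step(2)[OF L SE step.hyps(2)] show ?case
    by (simp add: diff_divide_distrib)
qed

lemma q_prob_prune_output:
  assumes L: "0 < log 2 (card E)" and out: "prune_output qh (card E) E S"
  shows "1 - (1 + ln (card E)) / (2^20 * log 2 (card E)) - 2 / card E \<le> q_prob E indep S"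
proof -
  have reach: "(prune_step qh (card E))\<^sup>*\<^sup>* E S"
    using out unfolding prune_output_def by blast
  have "card E \<noteq> 0"
    using dependent indep_empty finite_ground by (metis card_0_eq)
  then have "potential (card E) - potential (card S) \<le> 1 + ln (card E)"
    using potential_nonneg[of "card S"] unfolding potential_def by simp
  then have "(potential (card E) - potential (card S)) / (2^20 * log 2 (card E))
      \<le> (1 + ln (card E)) / (2^20 * log 2 (card E))"
    using L by (intro divide_right_mono) simp_all
  moreover have "2 * real (card E - card S) / (real (card E))\<^sup>2 \<le> 2 / card E"
    using \<open>card E \<noteq> 0\<close> by (simp add: power2_eq_square field_simps)
  ultimately show ?thesis
    using q_prob_prune_reachable[OF L reach] by linarith
qed

lemma p_prob_prune_output:
  assumes L: "0 < log 2 (card E)" and n: "2^22 * log 2 (card E) \<le> card E"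
    and out: "prune_output qh (card E) E S" and TS: "T \<subseteq> S"
  shows "card T / (2^21 * card S * log 2 (card E)) \<le> p_prob S (restrict_indep indep S) T"
proof (cases "T = {}")
  case True
  then show ?thesis unfolding p_prob_def by simp
next
  case False
  let ?L = "log 2 (card E)"
  have SE: "S \<subseteq> E"
    using out prune_reachable_subset unfolding prune_output_def by blast
  have "finite S"
    using finite_ground SE finite_subset by blast
  then have t: "1 \<le> card T" "card T \<le> card S" "card S \<le> card E"
    using False TS card_mono[OF finite_ground SE] card_mono[of S T]
    by (auto simp: Suc_le_eq card_gt_0_iff finite_subset)
  have "card T / (2^20 * card S * ?L) < qh S - qh (S - T)"
    using out False TS unfolding prune_output_def prune_step_def by auto
  then have gap: "card T / (2^20 * card S * ?L) - 2 / (real (card E))\<^sup>2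
      \<le> q_prob E indep S - q_prob E indep (S - T)"
    using estimate_diff[OF SE, of T] unfolding abs_le_iff by linarith
  have "2 / (real (card E))\<^sup>2 \<le> 1 / (2^21 * card E * ?L)"
    using n L t by (simp add: power2_eq_square field_simps)
  also have "\<dots> \<le> card T / (2^21 * card S * ?L)"
    using L t by (intro frac_le) simp_all
  finally have "card T / (2^21 * card S * ?L) \<le> card T / (2^20 * card S * ?L) - 2 / (real (card E))\<^sup>2"
    by (simp add: field_simps)
  with gap q_prob_diff_le_p_prob[OF SE TS] show ?thesis
    by linarith
qed

end

lemma eventually_log_bounds:
  "\<forall>\<^sub>F n in sequentially. 0 < log 2 (real n) \<and> 2^22 * log 2 (real n) \<le> real n
     \<and> (1 + ln (real n)) / (2^20 * log 2 (real n)) + 2 / real n \<le> 2 powi -20"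
proof -
  have "\<forall>\<^sub>F n in sequentially. 1 < ln (real n)"
    by real_asymp
  moreover have "\<forall>\<^sub>F n in sequentially. 2^22 * log 2 (real n) \<le> real n"
    by real_asymp
  moreover have "\<forall>\<^sub>F n in sequentially. 25/36 * (1 + ln (real n)) / ln (real n) + 2^21 / real n \<le> 1"
    by real_asymp
  ultimately show ?thesis
  proof eventually_elim
    case (elim n)
    have ln2: "0 < ln (2::real)" "ln (2::real) \<le> 25/36"
      using ln2_le_25_over_36 by simp_all
    have "(1 + ln (real n)) / (2^20 * log 2 (real n)) = ln 2 * (1 + ln (real n)) / ln (real n) / 2^20"
      by (simp add: log_def field_simps)
    also have "\<dots> \<le> 25/36 * (1 + ln (real n)) / ln (real n) / 2^20"
      using elim ln2 by (intro divide_right_mono mult_right_mono) simp_all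
    finally have "(1 + ln (real n)) / (2^20 * log 2 (real n)) + 2 / real n
        \<le> (25/36 * (1 + ln (real n)) / ln (real n) + 2^21 / real n) / 2^20"
      by (simp add: add_divide_distrib)
    also have "\<dots> \<le> 1 / 2^20"
      using elim(3) by (rule divide_right_mono) simp
    also have "\<dots> = 2 powi -20"
      by (simp add: power_int_minus)
    finally show ?case
      using elim ln2 by (simp add: log_def)
  qed
qed

theorem mainTheorem6:
  "\<exists>N::nat. \<forall>(E::'a set) indep (qh::'a set \<Rightarrow> real) S.
     matroid E indep \<longrightarrow> \<not> indep E \<longrightarrow> card E \<ge> N \<longrightarrow>
     (\<forall>T \<subseteq> E. \<bar>qh T - q_prob E indep T\<bar> \<le> 1 / (real (card E))^2) \<longrightarrow>
     prune_output qh (card E) E S \<longrightarrow>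
     S \<noteq> {} \<and> globally_optimal E indep S"
proof -
  obtain N where N: "\<And>n. N \<le> n \<Longrightarrow> 0 < log 2 (real n) \<and> 2^22 * log 2 (real n) \<le> real n
      \<and> (1 + ln (real n)) / (2^20 * log 2 (real n)) + 2 / real n \<le> 2 powi -20"
    using eventually_log_bounds unfolding eventually_sequentially by blast
  show ?thesis
  proof (intro exI[of _ N] allI impI)
    fix E :: "'a set" and indep qh S
    assume "matroid E indep" "\<not> indep E" "card E \<ge> N"
      "\<forall>T \<subseteq> E. \<bar>qh T - q_prob E indep T\<bar> \<le> 1 / (real (card E))^2"
      and out: "prune_output qh (card E) E S"
    then interpret prune_run E indep qh
      by unfold_locales auto
    from N[OF \<open>card E \<ge> N\<close>] have L: "0 < log 2 (card E)" "2^22 * log 2 (card E) \<le> card E"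
      and err: "(1 + ln (card E)) / (2^20 * log 2 (card E)) + 2 / card E \<le> 2 powi -20"
      by auto
    have q: "1 - 2 powi -20 \<le> q_prob E indep S"
      using q_prob_prune_output[OF L(1) out] err by linarith
    then have "S \<noteq> {}"
      using q_prob_empty by (auto simp: power_int_minus)
    with q p_prob_prune_output[OF L out] show "S \<noteq> {} \<and> globally_optimal E indep S"
      unfolding globally_optimal_def by blast
  qed
qed

end
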